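(* Let $I$ be a real closed interval and let $[a,b]$ be a closed subinterval of $I$. A standard function $F\colon I^*\to\mathbb{R}$ satisfies: $F$ is preassociative and unarily quasi-range-idempotent, there exists a continuous and strictly increasing function $f\colon[a,b]\to\mathbb{R}$ such that $F_1(x)=f(\mathrm{med}(a,x,b))$ for all $x\in I$, and $F_2$ is continuous, symmetric, nondecreasing in each argument and satisfies $F_2(x,x)=F_1(x)$ for every $x\in I$, if and only if there exist $c\in[a,b]$ and a continuous and strictly increasing function $f\colon[a,b]\to\mathbb{R}$ such that $$F_n(x_1,\ldots,x_n)=f\Big(\mathrm{med}\Big(a,\,\mathrm{med}\Big(\min_{1\leqslant i\leqslant n} x_i,\,c,\,\max_{1\leqslant i\leqslant n} x_i\Big),\,b\Big)\Big),\qquad n\geqslant 1.$$ In this case $f=F_1|_{[a,b]}$.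
   Context: $I^*=\bigcup_{n\geqslant 0}I^n$ is the set of finite tuples over $I$, $I^0=\{\varepsilon\}$ with $\varepsilon$ the empty tuple; $F(\mathbf{x},\mathbf{y})$ denotes $F$ applied to the concatenation, concatenation with $\varepsilon$ leaving tuples unchanged. $F_n=F|_{I^n}$, $F^{\flat}=F|_{I^*\setminus\{\varepsilon\}}$. $F$ is standard if $F(\mathbf{x})=F(\varepsilon)$ only for $\mathbf{x}=\varepsilon$. $F$ is preassociative if for all tuples $\mathbf{x},\mathbf{y},\mathbf{y}',\mathbf{z}$, $F(\mathbf{y})=F(\mathbf{y}')$ implies $F(\mathbf{x},\mathbf{y},\mathbf{z})=F(\mathbf{x},\mathbf{y}',\mathbf{z})$. $F$ is unarily quasi-range-idempotent if $\mathrm{ran}(F_1)=\mathrm{ran}(F^{\flat})$. $\mathrm{med}(x,y,z)$ denotes the median of three reals. *)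

theory Defs
  imports "HOL-Analysis.Analysis"
begin

text \<open>Tuples over I are lists whose entries lie in I; a function F : I^* -> R is a
  function on real lists, of which only the values on lists I matter.\<close>

definition med :: "real \<Rightarrow> real \<Rightarrow> real \<Rightarrow> real" where
  "med x y z = max (min x y) (min (max x y) z)"

definition standard_on :: "real set \<Rightarrow> (real list \<Rightarrow> real) \<Rightarrow> bool" where
  "standard_on I F \<longleftrightarrow> (\<forall>xs\<in>lists I. F xs = F [] \<longrightarrow> xs = [])"

definition preassociative_on :: "real set \<Rightarrow> (real list \<Rightarrow> real) \<Rightarrow> bool" where
  "preassociative_on I F \<longleftrightarrow>
     (\<forall>x\<in>lists I. \<forall>y\<in>lists I. \<forall>y'\<in>lists I. \<forall>z\<in>lists I.
        F y = F y' \<longrightarrow> F (x @ y @ z) = F (x @ y' @ z))"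

definition unarily_quasi_range_idempotent_on :: "real set \<Rightarrow> (real list \<Rightarrow> real) \<Rightarrow> bool" where
  "unarily_quasi_range_idempotent_on I F \<longleftrightarrow>
     (\<lambda>x. F [x]) ` I = F ` (lists I - {[]})"

end

theory Submission
  imports Defs
begin

text \<open>With \<open>G = clamped_median a b c\<close>, concatenation of tuples becomes the operation
  \<open>med _ c _\<close> on \<open>[a, b]\<close> (\<open>clamped_median_append\<close>), so \<open>f \<circ> G\<close> is preassociative and
  has all the other listed properties. Conversely, by quasi-range-idempotence
  \<open>F [p, q] = f (H p q)\<close> for an operation \<open>H\<close> on \<open>[a, b]\<close> that inherits continuity,
  symmetry, idempotence and monotonicity from \<open>F\<^sub>2\<close> and associativity from
  preassociativity. By the intermediate value theorem \<open>H a\<close> fixes \<open>[a, H a b]\<close> and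
  \<open>H _ b\<close> fixes \<open>[H a b, b]\<close>, which together with monotonicity forces
  \<open>H p q = med p (H a b) q\<close>; preassociativity then propagates this to tuples of any length.\<close>

lemma med_commute: "med p c q = med q c (p::real)"
  unfolding med_def by linarith

lemma med_idem: "med x c x = (x::real)"
  unfolding med_def by linarith

lemma med_mono:
  fixes x y z x' y' z' :: real
  shows "x \<le> x' \<Longrightarrow> y \<le> y' \<Longrightarrow> z \<le> z' \<Longrightarrow> med x y z \<le> med x' y' z'"
  unfolding med_def by (intro max.mono min.mono) auto

lemma mono_med_commute: "mono g \<Longrightarrow> g (med x y z) = med (g x) (g y) (g (z::real))"
  unfolding med_def by (simp add: max_of_mono min_of_mono)

lemma med_in_interval: "(a::real) \<le> b \<Longrightarrow> med a x b \<in> {a..b}"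
  unfolding med_def by auto

lemma med_eq_self: "(x::real) \<in> {a..b} \<Longrightarrow> med a x b = x"
  unfolding med_def by auto

lemma med_min_max:
  fixes c m1 M1 m2 M2 :: real
  assumes "m1 \<le> M1" "m2 \<le> M2"
  shows "med (min m1 m2) c (max M1 M2) = med (med m1 c M1) c (med m2 c M2)"
  using assms unfolding med_def min_def max_def by auto

definition clamped_median :: "real \<Rightarrow> real \<Rightarrow> real \<Rightarrow> real list \<Rightarrow> real" where
  "clamped_median a b c xs = med a (med (Min (set xs)) c (Max (set xs))) b"

lemma clamped_median_in_interval: "a \<le> b \<Longrightarrow> clamped_median a b c xs \<in> {a..b}"
  unfolding clamped_median_def by (rule med_in_interval)

lemma clamped_median_singleton: "clamped_median a b c [x] = med a x b"
  unfolding clamped_median_def by (simp add: med_idem)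

lemma clamped_median_pair: "clamped_median a b c [x, y] = med a (med (min x y) c (max x y)) b"
  unfolding clamped_median_def by (simp add: min_def max_def)

lemma clamped_median_append:
  assumes "xs \<noteq> []" "ys \<noteq> []" "a \<le> c" "c \<le> b"
  shows "clamped_median a b c (xs @ ys) = med (clamped_median a b c xs) c (clamped_median a b c ys)"
proof -
  have "mono (\<lambda>x. med a x b)" by (rule monoI) (simp add: med_mono)
  then have clamp: "med a (med u c v) b = med (med a u b) c (med a v b)" for u v
    using mono_med_commute[of "\<lambda>x. med a x b" u c v] med_eq_self[of c a b] assms(3,4) by simp
  have "Min (set xs) \<le> Max (set xs)" "Min (set ys) \<le> Max (set ys)"
    using assms(1,2) by (simp_all add: Min_le_iff)
  then show ?thesis
    using assms(1,2) by (simp add: clamped_median_def Min_Un Max_Un med_min_max clamp)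
qed

lemma preassociative_on_clamped_median:
  assumes std: "standard_on I F" and inj: "inj_on f {a..b}" and c: "a \<le> c" "c \<le> b"
    and F: "\<And>xs. xs \<in> lists I \<Longrightarrow> xs \<noteq> [] \<Longrightarrow> F xs = f (clamped_median a b c xs)"
  shows "preassociative_on I F"
  unfolding preassociative_on_def
proof (intro ballI impI)
  fix x y y' z assume lists: "x \<in> lists I" "y \<in> lists I" "y' \<in> lists I" "z \<in> lists I"
    and eq: "F y = F y'"
  show "F (x @ y @ z) = F (x @ y' @ z)"
  proof (cases "y = [] \<or> y' = []")
    case True
    then have "y = y'" using std eq lists unfolding standard_on_def by metis
    then show ?thesis by simp
  next
    case False
    have "a \<le> b" using c by linarith
    then have "clamped_median a b c y = clamped_median a b c y'"
      using eq F lists False inj clamped_median_in_interval by (metis inj_onD)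
    then have "clamped_median a b c (x @ y @ z) = clamped_median a b c (x @ y' @ z)"
      using False c by (cases "x = []"; cases "z = []") (simp_all add: clamped_median_append)
    then show ?thesis using F lists False by simp
  qed
qed

lemma unarily_quasi_range_idempotent_on_clamped_median:
  assumes "a \<le> b" "{a..b} \<subseteq> I"
    and F: "\<And>xs. xs \<in> lists I \<Longrightarrow> xs \<noteq> [] \<Longrightarrow> F xs = f (clamped_median a b c xs)"
  shows "unarily_quasi_range_idempotent_on I F"
  unfolding unarily_quasi_range_idempotent_on_def
proof
  show "(\<lambda>x. F [x]) ` I \<subseteq> F ` (lists I - {[]})" by force
  show "F ` (lists I - {[]}) \<subseteq> (\<lambda>x. F [x]) ` I"
  proof
    fix v assume "v \<in> F ` (lists I - {[]})"
    then obtain xs where xs: "xs \<in> lists I" "xs \<noteq> []" "v = F xs" by auto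
    let ?t = "clamped_median a b c xs"
    have t: "?t \<in> {a..b}" using clamped_median_in_interval[OF \<open>a \<le> b\<close>] .
    then have "F [?t] = f ?t"
      using F[of "[?t]"] assms(2) by (auto simp: clamped_median_singleton med_eq_self)
    then have "v = F [?t]" using xs F by simp
    then show "v \<in> (\<lambda>x. F [x]) ` I" using t assms(2) by blast
  qed
qed

lemma clamped_median_representation_imp_properties:
  fixes I :: "real set" and a b c :: real and F :: "real list \<Rightarrow> real"
  assumes "a \<le> b" and sub: "{a..b} \<subseteq> I" and std: "standard_on I F" and c: "c \<in> {a..b}"
    and fc: "continuous_on {a..b} f" and fm: "strict_mono_on {a..b} f"
    and F: "\<forall>xs\<in>lists I. xs \<noteq> [] \<longrightarrow> F xs = f (med a (med (Min (set xs)) c (Max (set xs))) b)"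
  shows "preassociative_on I F \<and> unarily_quasi_range_idempotent_on I F
          \<and> (\<exists>f. continuous_on {a..b} f \<and> strict_mono_on {a..b} f
                 \<and> (\<forall>x\<in>I. F [x] = f (med a x b)))
          \<and> continuous_on (I \<times> I) (\<lambda>(x, y). F [x, y])
          \<and> (\<forall>x\<in>I. \<forall>y\<in>I. F [x, y] = F [y, x])
          \<and> (\<forall>x\<in>I. \<forall>x'\<in>I. \<forall>y\<in>I. x \<le> x' \<longrightarrow> F [x, y] \<le> F [x', y] \<and> F [y, x] \<le> F [y, x'])
          \<and> (\<forall>x\<in>I. F [x, x] = F [x])"
proof -
  have FG: "F xs = f (clamped_median a b c xs)" if "xs \<in> lists I" "xs \<noteq> []" for xs
    using F that unfolding clamped_median_def by blast
  have F1: "F [x] = f (med a x b)" if "x \<in> I" for x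
    using FG[of "[x]"] that by (simp add: clamped_median_singleton)
  have F2: "F [x, y] = f (med a (med (min x y) c (max x y)) b)" if "x \<in> I" "y \<in> I" for x y
    using FG[of "[x, y]"] that by (simp add: clamped_median_pair)
  have "continuous_on (I \<times> I) (\<lambda>p. med a (med (min (fst p) (snd p)) c (max (fst p) (snd p))) b)"
    unfolding med_def by (intro continuous_intros)
  then have "continuous_on (I \<times> I) (\<lambda>p. f (med a (med (min (fst p) (snd p)) c (max (fst p) (snd p))) b))"
    by (rule continuous_on_compose2[OF fc]) (auto intro: med_in_interval[OF \<open>a \<le> b\<close>])
  then have cont: "continuous_on (I \<times> I) (\<lambda>(x, y). F [x, y])"
    by (rule continuous_on_cong[THEN iffD1, rotated 2]) (auto simp: F2)
  have mono: "F [x, y] \<le> F [x', y]" if "x \<in> I" "x' \<in> I" "y \<in> I" "x \<le> x'" for x x' y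
    unfolding F2[OF that(1,3)] F2[OF that(2,3)]
    using \<open>a \<le> b\<close> that(4)
    by (intro strict_mono_on_leD[OF fm] med_in_interval med_mono order_refl min.mono max.mono)
  have sym: "\<forall>x\<in>I. \<forall>y\<in>I. F [x, y] = F [y, x]"
    using F2 by (simp add: min.commute max.commute)
  have "preassociative_on I F"
    using preassociative_on_clamped_median[OF std strict_mono_on_imp_inj_on[OF fm], where c = c] c FG
    by simp
  moreover have "unarily_quasi_range_idempotent_on I F"
    using unarily_quasi_range_idempotent_on_clamped_median[OF \<open>a \<le> b\<close> sub] FG by blast
  moreover have "\<forall>x\<in>I. \<forall>x'\<in>I. \<forall>y\<in>I. x \<le> x' \<longrightarrow> F [x, y] \<le> F [x', y] \<and> F [y, x] \<le> F [y, x']"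
    using mono sym by simp
  moreover have "\<forall>x\<in>I. F [x, x] = F [x]"
    using F1 F2 by (simp add: med_idem)
  ultimately show ?thesis
    using fc fm F1 cont sym by blast
qed

lemma continuous_idempotent_fixes_between:
  fixes g :: "real \<Rightarrow> real"
  assumes "a \<le> b" "continuous_on {a..b} g" "\<And>t. t \<in> {a..b} \<Longrightarrow> g (g t) = g t"
    and "g a \<le> p" "p \<le> g b"
  shows "g p = p"
proof -
  obtain t where "t \<in> {a..b}" "g t = p"
    using IVT'[of g a p b] assms by auto
  then show ?thesis using assms(3) by metis
qed

lemma mono_idem_eq_med_from_boundary:
  fixes H :: "real \<Rightarrow> real \<Rightarrow> real"
  assumes pq: "p \<le> q" "p \<in> {a..b}" "q \<in> {a..b}" and c: "c \<in> {a..b}"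
    and idem: "H p p = p" "H q q = q"
    and mono1: "\<And>x x' y. x \<in> {a..b} \<Longrightarrow> x' \<in> {a..b} \<Longrightarrow> y \<in> {a..b} \<Longrightarrow> x \<le> x' \<Longrightarrow> H x y \<le> H x' y"
    and mono2: "\<And>x y y'. x \<in> {a..b} \<Longrightarrow> y \<in> {a..b} \<Longrightarrow> y' \<in> {a..b} \<Longrightarrow> y \<le> y' \<Longrightarrow> H x y \<le> H x y'"
    and left: "\<And>x. x \<in> {a..c} \<Longrightarrow> H a x = x"
    and right: "\<And>x. x \<in> {c..b} \<Longrightarrow> H x b = x"
  shows "H p q = med p c q"
proof -
  have ab: "a \<in> {a..b}" "b \<in> {a..b}" using pq by auto
  consider "q \<le> c" | "c \<le> p" | "p \<le> c" "c \<le> q" by linarith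
  then show ?thesis
  proof cases
    case 1
    have "H a q = q" using left 1 pq by simp
    moreover have "H a q \<le> H p q" "H p q \<le> H q q"
      using mono1[of a p q] mono1[of p q q] pq ab by simp_all
    ultimately have "H p q = q" using idem by linarith
    then show ?thesis using 1 pq unfolding med_def by auto
  next
    case 2
    have "H p b = p" using right 2 pq by simp
    moreover have "H p p \<le> H p q" "H p q \<le> H p b"
      using mono2[of p p q] mono2[of p q b] pq ab by simp_all
    ultimately have "H p q = p" using idem by linarith
    then show ?thesis using 2 pq unfolding med_def by auto
  next
    case 3
    have "H a c = c" "H c b = c" using left right c by simp_all
    moreover have "H a c \<le> H a q" "H a q \<le> H p q" "H p q \<le> H p b" "H p b \<le> H c b"
      using mono2[of a c q] mono1[of a p q] mono2[of p q b] mono1[of p c b] 3 pq ab c by simp_all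
    ultimately have "H p q = c" by linarith
    then show ?thesis using 3 pq unfolding med_def by auto
  qed
qed

lemma continuous_monotone_semilattice_op_eq_med:
  fixes H :: "real \<Rightarrow> real \<Rightarrow> real"
  assumes "a \<le> b"
    and closed: "\<And>p q. p \<in> {a..b} \<Longrightarrow> q \<in> {a..b} \<Longrightarrow> H p q \<in> {a..b}"
    and cont: "continuous_on ({a..b} \<times> {a..b}) (\<lambda>(p, q). H p q)"
    and assoc: "\<And>p q r. p \<in> {a..b} \<Longrightarrow> q \<in> {a..b} \<Longrightarrow> r \<in> {a..b} \<Longrightarrow> H (H p q) r = H p (H q r)"
    and comm: "\<And>p q. p \<in> {a..b} \<Longrightarrow> q \<in> {a..b} \<Longrightarrow> H p q = H q p"
    and idem: "\<And>p. p \<in> {a..b} \<Longrightarrow> H p p = p"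
    and mono: "\<And>p p' q. p \<in> {a..b} \<Longrightarrow> p' \<in> {a..b} \<Longrightarrow> q \<in> {a..b} \<Longrightarrow> p \<le> p' \<Longrightarrow> H p q \<le> H p' q"
    and pq: "p \<in> {a..b}" "q \<in> {a..b}"
  shows "H p q = med p (H a b) q"
proof -
  define c where "c = H a b"
  have ab: "a \<in> {a..b}" "b \<in> {a..b}" using \<open>a \<le> b\<close> by auto
  have c: "c \<in> {a..b}" unfolding c_def using closed ab .
  have mono2: "H x y \<le> H x y'" if "x \<in> {a..b}" "y \<in> {a..b}" "y' \<in> {a..b}" "y \<le> y'" for x y y'
    using mono[OF that(2,3,1,4)] comm that by simp
  have fixes_between: "H u p = p" if "u \<in> {a..b}" "H u a \<le> p" "p \<le> H u b" for u p
  proof (rule continuous_idempotent_fixes_between[OF \<open>a \<le> b\<close> _ _ that(2,3)])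
    have "continuous_on {a..b} (\<lambda>t. (\<lambda>(p, q). H p q) (u, t))"
      by (rule continuous_on_compose2[OF cont]) (use that(1) in \<open>auto intro!: continuous_intros\<close>)
    then show "continuous_on {a..b} (H u)" by simp
    show "H u (H u t) = H u t" if "t \<in> {a..b}" for t
      using assoc[of u u t] idem that \<open>u \<in> {a..b}\<close> by simp
  qed
  have left: "H a x = x" if "x \<in> {a..c}" for x
    using fixes_between[of a x] that ab idem[of a] unfolding c_def by simp
  have right: "H x b = x" if "x \<in> {c..b}" for x
  proof -
    have "H b x = x" using fixes_between[of b x] that ab idem[of b] comm[of b a] unfolding c_def by simp
    then show ?thesis using comm[of x b] that c by simp
  qed
  have le_case: "H x y = med x c y" if "x \<le> y" "x \<in> {a..b}" "y \<in> {a..b}" for x y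
    by (rule mono_idem_eq_med_from_boundary[OF that c idem[OF that(2)] idem[OF that(3)] mono mono2 left right])
  have "H p q = med p c q"
  proof (cases "p \<le> q")
    case True
    then show ?thesis using le_case pq by simp
  next
    case False
    then have "H q p = med q c p" using le_case[of q p] pq by simp
    then show ?thesis using comm[OF pq] med_commute[of q c p] by simp
  qed
  then show ?thesis unfolding c_def .
qed

lemma preassociative_onD:
  assumes "preassociative_on I F" "x \<in> lists I" "y \<in> lists I" "y' \<in> lists I" "z \<in> lists I"
    and "F y = F y'"
  shows "F (x @ y @ z) = F (x @ y' @ z)"
  using assms unfolding preassociative_on_def by blast

lemma preassociative_on_eq_clamped_median:
  assumes PA: "preassociative_on I F" and sub: "{a..b} \<subseteq> I" and c: "a \<le> c" "c \<le> b"
    and F1: "\<And>x. x \<in> I \<Longrightarrow> F [x] = f (med a x b)"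
    and F2: "\<And>p q. p \<in> {a..b} \<Longrightarrow> q \<in> {a..b} \<Longrightarrow> F [p, q] = f (med p c q)"
    and xs: "xs \<noteq> []" "xs \<in> lists I"
  shows "F xs = f (clamped_median a b c xs)"
  using xs
proof (induction xs rule: list_nonempty_induct)
  case (single x)
  then show ?case using F1 by (simp add: clamped_median_singleton)
next
  case (cons x ys)
  let ?t = "clamped_median a b c ys" and ?u = "med a x b"
  have "a \<le> b" using c by linarith
  have tu: "?t \<in> {a..b}" "?u \<in> {a..b}"
    using clamped_median_in_interval med_in_interval \<open>a \<le> b\<close> by auto
  have unary: "F [v] = f v" if "v \<in> {a..b}" for v
    using F1[of v] that sub by (auto simp: med_eq_self)
  have lists: "[x] \<in> lists I" "ys \<in> lists I" "[?t] \<in> lists I" "[?u] \<in> lists I" "[] \<in> lists I"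
    using cons.prems tu sub by auto
  have tail: "F ys = F [?t]" using cons.IH cons.prems unary[OF tu(1)] by simp
  have head: "F [x] = F [?u]" using F1 unary[OF tu(2)] cons.prems by simp
  have "F (x # ys) = F ([x] @ ys @ [])" by simp
  also have "\<dots> = F ([x] @ [?t] @ [])"
    using preassociative_onD[OF PA] lists tail by blast
  also have "\<dots> = F ([] @ [x] @ [?t])" by simp
  also have "\<dots> = F ([] @ [?u] @ [?t])"
    using preassociative_onD[OF PA] lists head by blast
  also have "\<dots> = f (med ?u c ?t)" using F2 tu by simp
  also have "med ?u c ?t = clamped_median a b c ([x] @ ys)"
    using clamped_median_append[of "[x]" ys a c b] cons.hyps c by (simp add: clamped_median_singleton)
  finally show ?case by simp
qed

lemma pairs_eq_med:
  fixes I :: "real set" and a b :: real and F :: "real list \<Rightarrow> real"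
  assumes ab: "a \<le> b" and sub: "{a..b} \<subseteq> I"
    and PA: "preassociative_on I F" and QRI: "unarily_quasi_range_idempotent_on I F"
    and fc: "continuous_on {a..b} f" and fm: "strict_mono_on {a..b} f"
    and F1: "\<forall>x\<in>I. F [x] = f (med a x b)"
    and cont: "continuous_on (I \<times> I) (\<lambda>(x, y). F [x, y])"
    and sym: "\<forall>x\<in>I. \<forall>y\<in>I. F [x, y] = F [y, x]"
    and mono: "\<forall>x\<in>I. \<forall>x'\<in>I. \<forall>y\<in>I. x \<le> x' \<longrightarrow> F [x, y] \<le> F [x', y] \<and> F [y, x] \<le> F [y, x']"
    and diag: "\<forall>x\<in>I. F [x, x] = F [x]"
  obtains c where "c \<in> {a..b}" "\<And>p q. p \<in> {a..b} \<Longrightarrow> q \<in> {a..b} \<Longrightarrow> F [p, q] = f (med p c q)"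
proof -
  have inj: "inj_on f {a..b}" using fm by (rule strict_mono_on_imp_inj_on)
  have unary: "F [v] = f v" if "v \<in> {a..b}" for v
    using F1 sub that by (auto simp: med_eq_self)
  have range: "F [p, q] \<in> f ` {a..b}" if "p \<in> {a..b}" "q \<in> {a..b}" for p q
  proof -
    have "[p, q] \<in> lists I - {[]}" using that sub by auto
    then have "F [p, q] \<in> (\<lambda>x. F [x]) ` I"
      using QRI unfolding unarily_quasi_range_idempotent_on_def by blast
    then show ?thesis using F1 med_in_interval[OF ab] by auto
  qed
  define H where "H p q = the_inv_into {a..b} f (F [p, q])" for p q
  have H_in: "H p q \<in> {a..b}" if "p \<in> {a..b}" "q \<in> {a..b}" for p q
    unfolding H_def using the_inv_into_into[OF inj range[OF that] order_refl] .
  have F_H: "F [p, q] = f (H p q)" if "p \<in> {a..b}" "q \<in> {a..b}" for p q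
    unfolding H_def using f_the_inv_into_f[OF inj range[OF that]] by simp
  have H_eq: "H p q = H p' q'"
    if "F [p, q] = F [p', q']" "p \<in> {a..b}" "q \<in> {a..b}" "p' \<in> {a..b}" "q' \<in> {a..b}" for p q p' q'
    using that F_H H_in inj by (metis inj_onD)
  have "continuous_on ({a..b} \<times> {a..b}) (\<lambda>x. the_inv_into {a..b} f ((\<lambda>(p, q). F [p, q]) x))"
    by (rule continuous_on_compose2[OF continuous_on_inv_into[OF fc compact_Icc inj] continuous_on_subset[OF cont]])
      (use sub range in force)+
  then have H_cont: "continuous_on ({a..b} \<times> {a..b}) (\<lambda>(p, q). H p q)"
    by (simp add: H_def case_prod_unfold)
  have H_assoc: "H (H p q) r = H p (H q r)" if pqr: "p \<in> {a..b}" "q \<in> {a..b}" "r \<in> {a..b}" for p q r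
  proof (rule H_eq)
    have "F ([] @ [p, q] @ [r]) = F ([] @ [H p q] @ [r])"
      by (rule preassociative_onD[OF PA]) (use pqr H_in sub F_H unary in auto)
    moreover have "F ([p] @ [q, r] @ []) = F ([p] @ [H q r] @ [])"
      by (rule preassociative_onD[OF PA]) (use pqr H_in sub F_H unary in auto)
    ultimately show "F [H p q, r] = F [p, H q r]" by simp
  qed (use H_in pqr in auto)
  have H_comm: "H p q = H q p" if "p \<in> {a..b}" "q \<in> {a..b}" for p q
    using H_eq[OF _ that that(2,1)] sym sub that by (meson subsetD)
  have H_idem: "H p p = p" if "p \<in> {a..b}" for p
    using F_H[OF that that] H_in[OF that that] diag unary[OF that] sub that inj by (metis inj_onD subsetD)
  have H_mono: "H p q \<le> H p' q" if "p \<in> {a..b}" "p' \<in> {a..b}" "q \<in> {a..b}" "p \<le> p'" for p p' q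
  proof -
    have "F [p, q] \<le> F [p', q]" using mono that sub by blast
    then show ?thesis
      using F_H H_in that strict_mono_on_less_eq[OF fm] by metis
  qed
  show ?thesis
  proof
    show "H a b \<in> {a..b}" using H_in ab by simp
    show "F [p, q] = f (med p (H a b) q)" if "p \<in> {a..b}" "q \<in> {a..b}" for p q
      using F_H[OF that]
        continuous_monotone_semilattice_op_eq_med[OF ab H_in H_cont H_assoc H_comm H_idem H_mono that]
      by simp
  qed
qed

lemma properties_imp_clamped_median_representation:
  fixes I :: "real set" and a b :: real and F :: "real list \<Rightarrow> real"
  assumes ab: "a \<le> b" and sub: "{a..b} \<subseteq> I"
    and PA: "preassociative_on I F" and QRI: "unarily_quasi_range_idempotent_on I F"
    and fc: "continuous_on {a..b} f" and fm: "strict_mono_on {a..b} f"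
    and F1: "\<forall>x\<in>I. F [x] = f (med a x b)"
    and cont: "continuous_on (I \<times> I) (\<lambda>(x, y). F [x, y])"
    and sym: "\<forall>x\<in>I. \<forall>y\<in>I. F [x, y] = F [y, x]"
    and mono: "\<forall>x\<in>I. \<forall>x'\<in>I. \<forall>y\<in>I. x \<le> x' \<longrightarrow> F [x, y] \<le> F [x', y] \<and> F [y, x] \<le> F [y, x']"
    and diag: "\<forall>x\<in>I. F [x, x] = F [x]"
  shows "\<exists>c\<in>{a..b}. \<exists>f. continuous_on {a..b} f \<and> strict_mono_on {a..b} f
            \<and> (\<forall>xs\<in>lists I. xs \<noteq> [] \<longrightarrow>
                 F xs = f (med a (med (Min (set xs)) c (Max (set xs))) b))"
proof -
  obtain c where c: "c \<in> {a..b}"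
    and F2: "\<And>p q. p \<in> {a..b} \<Longrightarrow> q \<in> {a..b} \<Longrightarrow> F [p, q] = f (med p c q)"
    using pairs_eq_med[OF assms] by blast
  have "F xs = f (clamped_median a b c xs)" if "xs \<in> lists I" "xs \<noteq> []" for xs
    using preassociative_on_eq_clamped_median[OF PA sub _ _ _ F2 that(2,1)] c F1 by auto
  then show ?thesis using c fc fm unfolding clamped_median_def by blast
qed

theorem corollary5p9:
  fixes I :: "real set" and a b :: real and F :: "real list \<Rightarrow> real"
  assumes "is_interval I" and "closed I"
    and "a \<le> b" and "{a..b} \<subseteq> I"
    and "standard_on I F"
  shows "((preassociative_on I F \<and> unarily_quasi_range_idempotent_on I F
          \<and> (\<exists>f. continuous_on {a..b} f \<and> strict_mono_on {a..b} f
                 \<and> (\<forall>x\<in>I. F [x] = f (med a x b)))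
          \<and> continuous_on (I \<times> I) (\<lambda>(x, y). F [x, y])
          \<and> (\<forall>x\<in>I. \<forall>y\<in>I. F [x, y] = F [y, x])
          \<and> (\<forall>x\<in>I. \<forall>x'\<in>I. \<forall>y\<in>I. x \<le> x' \<longrightarrow> F [x, y] \<le> F [x', y] \<and> F [y, x] \<le> F [y, x'])
          \<and> (\<forall>x\<in>I. F [x, x] = F [x]))
         \<longleftrightarrow>
         (\<exists>c\<in>{a..b}. \<exists>f. continuous_on {a..b} f \<and> strict_mono_on {a..b} f
            \<and> (\<forall>xs\<in>lists I. xs \<noteq> [] \<longrightarrow>
                 F xs = f (med a (med (Min (set xs)) c (Max (set xs))) b))))
     \<and> (\<forall>c\<in>{a..b}. \<forall>f. continuous_on {a..b} f \<and> strict_mono_on {a..b} f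
            \<and> (\<forall>xs\<in>lists I. xs \<noteq> [] \<longrightarrow>
                 F xs = f (med a (med (Min (set xs)) c (Max (set xs))) b))
          \<longrightarrow> (\<forall>x\<in>{a..b}. f x = F [x]))"
proof -
  \<comment> \<open>Only \<open>{a..b} \<subseteq> I\<close> is needed.\<close>
  have unary: "f x = F [x]"
    if "x \<in> {a..b}" "\<forall>xs\<in>lists I. xs \<noteq> [] \<longrightarrow> F xs = f (med a (med (Min (set xs)) c (Max (set xs))) b)"
    for c f x
    using that assms(4) by (auto simp: med_idem med_eq_self)
  show ?thesis
    using unary properties_imp_clamped_median_representation[OF assms(3,4)]
      clamped_median_representation_imp_properties[OF assms(3,4,5)] by blast
qed

end
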